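(* (1) For every packed word $g$, $g\leq\mathrm{Std}(g)$. (2) If $f,g$ are packed words with $f\leq g$, then $\mathrm{Std}(f)=\mathrm{Std}(g)$.
   Context: $[n]=\{1,\ldots,n\}$. A packed word of length $n$ is a word $f=f(1)\ldots f(n)$ of positive integers with $\{f(1),\ldots,f(n)\}=[\max f]$. For packed words $f,g$ of the same length $n$, $g\leq f$ means: for all $i,j\in[n]$, $f(i)\leq f(j)\Rightarrow g(i)\leq g(j)$; $f(i)>f(j)$ and $i<j\Rightarrow g(i)>g(j)$; $f(i)=f(j)\Rightarrow g(i)=g(j)$. The standardization $\mathrm{Std}(f)$ of a packed word $f$ of length $n$ is the unique permutation $\sigma$ of $[n]$ (viewed as the packed word $\sigma(1)\ldots\sigma(n)$) such that for all $i,j$: $f(i)<f(j)\Rightarrow\sigma(i)<\sigma(j)$, and ($f(i)=f(j)$ and $i<j$) $\Rightarrow\sigma(i)<\sigma(j)$. *)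

theory Defs
  imports Main
begin

text \<open>Words are lists of naturals; position i of the paper corresponds to list index i-1.\<close>

definition packed :: "nat list \<Rightarrow> bool" where
  "packed f \<longleftrightarrow> (\<exists>m. set f = {1..m})"

definition pw_le :: "nat list \<Rightarrow> nat list \<Rightarrow> bool" where
  "pw_le g f \<longleftrightarrow> length g = length f \<and>
     (\<forall>i<length f. \<forall>j<length f.
        (f ! i \<le> f ! j \<longrightarrow> g ! i \<le> g ! j) \<and>
        (f ! i > f ! j \<and> i < j \<longrightarrow> g ! i > g ! j) \<and>
        (f ! i = f ! j \<longrightarrow> g ! i = g ! j))"

definition is_std :: "nat list \<Rightarrow> nat list \<Rightarrow> bool" where
  "is_std f s \<longleftrightarrow> length s = length f \<and> set s = {1..length f} \<and>
     (\<forall>i<length f. \<forall>j<length f.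
        (f ! i < f ! j \<longrightarrow> s ! i < s ! j) \<and>
        (f ! i = f ! j \<and> i < j \<longrightarrow> s ! i < s ! j))"

definition Std :: "nat list \<Rightarrow> nat list" where
  "Std f = (THE s. is_std f s)"

end

theory Submission
  imports Defs
begin

text \<open>Standardization reads a word as the strict total order on positions ordered by value, ties
  broken from left to right; \<open>Std f\<close> lists the ranks of the positions in that order. Hence
  \<open>Std g\<close> determines that order and with it the relation \<open>g \<le> Std g\<close>. Conversely, \<open>f \<le> g\<close> forces
  every pair ordered by \<open>g\<close> to be ordered the same way by \<open>f\<close>, so the permutation \<open>Std g\<close> also
  satisfies the defining conditions of \<open>Std f\<close>.\<close>

definition std_less :: "nat list \<Rightarrow> nat \<Rightarrow> nat \<Rightarrow> bool" where
  "std_less f i j \<longleftrightarrow> f ! i < f ! j \<or> (f ! i = f ! j \<and> i < j)"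

definition std_rank :: "nat list \<Rightarrow> nat \<Rightarrow> nat" where
  "std_rank f i = Suc (card {k. k < length f \<and> std_less f k i})"

lemma std_less_trans: "std_less f i j \<Longrightarrow> std_less f j k \<Longrightarrow> std_less f i k"
  unfolding std_less_def by auto

lemma std_less_trichotomy: "std_less f i j \<or> i = j \<or> std_less f j i"
  unfolding std_less_def by auto

lemma std_less_irrefl: "\<not> std_less f i i"
  unfolding std_less_def by simp

lemma is_std_iff_std_less:
  "is_std f s \<longleftrightarrow> length s = length f \<and> set s = {1..length f} \<and>
     (\<forall>i<length f. \<forall>j<length f. std_less f i j \<longrightarrow> s ! i < s ! j)"
  unfolding is_std_def std_less_def by blast

lemma is_std_less_iff:
  assumes "is_std f s" "i < length f" "j < length f"
  shows "s ! i < s ! j \<longleftrightarrow> std_less f i j"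
  using assms std_less_trichotomy[of f i j] std_less_irrefl[of f]
  unfolding is_std_iff_std_less by (metis less_asym)

lemma is_std_nth:
  assumes s: "is_std f s" and i: "i < length f"
  shows "s ! i = std_rank f i"
proof -
  let ?n = "length f" and ?below = "{k. k < length f \<and> s ! k < s ! i}"
  have len: "length s = ?n" and set_s: "set s = {1..?n}"
    using s unfolding is_std_def by auto
  have "(!) s ` ?below = {v \<in> set s. v < s ! i}"
    using len by (auto simp: in_set_conv_nth)
  also have "\<dots> = {1..<s ! i}"
    using set_s len i nth_mem[of i s] by auto
  finally have image: "(!) s ` ?below = {1..<s ! i}" .
  have "distinct s"
    using set_s len by (simp add: card_distinct)
  then have "inj_on ((!) s) ?below"
    using len by (auto simp: inj_on_def nth_eq_iff_index_eq)
  then have "card ?below = card {1..<s ! i}"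
    unfolding image[symmetric] by (rule card_image[symmetric])
  moreover have "?below = {k. k < ?n \<and> std_less f k i}"
    using is_std_less_iff[OF s _ i] by blast
  moreover have "s ! i \<ge> 1"
    using set_s len i nth_mem[of i s] by auto
  ultimately show ?thesis
    unfolding std_rank_def by simp
qed

lemma std_rank_less:
  assumes "i < length f" "j < length f" "std_less f i j"
  shows "std_rank f i < std_rank f j"
proof -
  have "{k. k < length f \<and> std_less f k i} \<subset> {k. k < length f \<and> std_less f k j}"
    using assms std_less_trans[of f _ i j] std_less_irrefl[of f i] by auto
  then show ?thesis
    unfolding std_rank_def by (simp add: psubset_card_mono)
qed

lemma std_rank_le:
  assumes i: "i < length f"
  shows "std_rank f i \<le> length f"
proof -
  have "{k. k < length f \<and> std_less f k i} \<subseteq> {0..<length f} - {i}"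
    using std_less_irrefl[of f i] by auto
  then have "card {k. k < length f \<and> std_less f k i} \<le> card ({0..<length f} - {i})"
    by (intro card_mono) auto
  then show ?thesis
    using i unfolding std_rank_def by simp
qed

lemma is_std_map_std_rank: "is_std f (map (std_rank f) [0..<length f])"
proof -
  let ?n = "length f" and ?s = "map (std_rank f) [0..<length f]"
  have "inj_on (std_rank f) {0..<?n}"
    by (rule inj_onI) (metis atLeastLessThan_iff less_irrefl std_less_trichotomy std_rank_less)
  then have "card (set ?s) = ?n"
    by (simp add: card_image)
  moreover have "set ?s \<subseteq> {1..?n}"
    using std_rank_le by (auto simp: std_rank_def)
  ultimately have "set ?s = {1..?n}"
    by (intro card_subset_eq) auto
  then show ?thesis
    unfolding is_std_iff_std_less by (simp add: std_rank_less)
qed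

lemma Std_eqI:
  assumes s: "is_std f s"
  shows "Std f = s"
  unfolding Std_def
proof (rule the_equality)
  fix t assume t: "is_std f t"
  show "t = s"
  proof (rule nth_equalityI)
    show "length t = length s"
      using s t unfolding is_std_def by simp
    show "t ! i = s ! i" if "i < length t" for i
    proof -
      have "i < length f"
        using that t unfolding is_std_def by simp
      then show ?thesis
        using is_std_nth[OF s] is_std_nth[OF t] by simp
    qed
  qed
qed (fact s)

lemma is_std_Std: "is_std f (Std f)"
  unfolding Std_eqI[OF is_std_map_std_rank] by (rule is_std_map_std_rank)

lemma pw_le_is_std:
  assumes s: "is_std g s"
  shows "pw_le g s"
proof -
  have len: "length s = length g"
    using s unfolding is_std_def by simp
  have "(s ! i \<le> s ! j \<longrightarrow> g ! i \<le> g ! j) \<and> (s ! i > s ! j \<and> i < j \<longrightarrow> g ! i > g ! j) \<and>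
      (s ! i = s ! j \<longrightarrow> g ! i = g ! j)" if ij: "i < length g" "j < length g" for i j
    using is_std_less_iff[OF s ij] is_std_less_iff[OF s ij(2,1)] unfolding std_less_def by auto
  then show ?thesis
    unfolding pw_le_def len by blast
qed

lemma pw_le_std_less:
  assumes le: "pw_le f g" and ij: "i < length g" "j < length g" and "std_less f i j"
  shows "std_less g i j"
proof -
  have "g ! j \<le> g ! i \<longrightarrow> f ! j \<le> f ! i" "g ! i < g ! j \<and> j < i \<longrightarrow> f ! i < f ! j"
    "g ! i = g ! j \<longrightarrow> f ! i = f ! j" "g ! j < g ! i \<and> i < j \<longrightarrow> f ! j < f ! i"
    using le ij unfolding pw_le_def by blast+
  with \<open>std_less f i j\<close> show ?thesis
    unfolding std_less_def by auto
qed

lemma Std_eq_if_pw_le: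
  assumes "pw_le f g"
  shows "Std f = Std g"
proof (rule Std_eqI)
  have "length f = length g"
    using assms unfolding pw_le_def by simp
  then show "is_std f (Std g)"
    using is_std_Std[of g] pw_le_std_less[OF assms]
    unfolding is_std_iff_std_less by auto
qed

theorem lemma24:
  shows "(\<forall>g. packed g \<longrightarrow> pw_le g (Std g)) \<and>
         (\<forall>f g. packed f \<and> packed g \<and> pw_le f g \<longrightarrow> Std f = Std g)"
  using pw_le_is_std[OF is_std_Std] Std_eq_if_pw_le by blast

end
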